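(* Fix $y_0\in Y$. (a) A pair $(\bar\psi,\bar\eta)\in C(Y)\times C(Y)$ is an optimal solution of the dual problem if and only if both of the following hold: - $\bar\psi(f(y,u))-\bar\psi(y)\ge0$ for all $(y,u)\in G$; - $\min_{(y,u)\in G}\{k(y,u)-\bar\psi(y)+\bar\eta(f(y,u))-\bar\eta(y)\}=V(y_0)-\bar\psi(y_0)$. (b) If $\bar\eta\in C(Y)$ satisfies $\min_{(y,u)\in G}\{k(y,u)-V(y)+\bar\eta(f(y,u))-\bar\eta(y)\}=0$, then the pair $(V,\bar\eta)$ is an optimal solution of the dual problem.
   Context: Let $Y\subset\mathbb{R}^m$ be nonempty compact, $U_0$ a compact metric space, $U(\cdot):Y\rightsquigarrow U_0$ upper semicontinuous and compact-valued, and $f:\mathbb{R}^m\times U_0\to\mathbb{R}^m$, $k:\mathbb{R}^m\times U_0\to\mathbb{R}$ continuous. Put $A(y):=\{u\in U(y): f(y,u)\in Y\}$ and $G:=\{(y,u):y\in Y,\ u\in A(y)\}$. Standing assumption: $A(y)\ne\emptyset$ for all $y\in Y$. For $y_0\in Y$, let $\mathcal U_T(y_0)$ be the set of controls $u(0),\dots,u(T-1)$ with $u(t)\in A(y(t))$, where $y(0)=y_0$ and $y(t+1)=f(y(t),u(t))$. Define $V_T(y_0):=\frac1T\min_{u\in\mathcal U_T(y_0)}\sum_{t=0}^{T-1}k(y(t),u(t))$. Standing assumption of this result: for every $y\in Y$ the limit $V(y):=\lim_{T\to\infty}V_T(y)$ exists, and $V$ is continuous on $Y$. Dual problem: $d^*(y_0):=\sup\mu$,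 where the supremum is over triples $(\mu,\psi,\eta)\in\mathbb{R}\times C(Y)\times C(Y)$ with, for all $(y,u)\in G$: $$k(y,u)+\psi(y_0)-\psi(y)+\eta(f(y,u))-\eta(y)-\mu\ge0,\qquad\psi(f(y,u))-\psi(y)\ge0.$$ A pair $(\bar\psi,\bar\eta)\in C(Y)\times C(Y)$ is called an optimal solution of the dual problem if for all $(y,u)\in G$: $$k(y,u)+\bar\psi(y_0)-\bar\psi(y)+\bar\eta(f(y,u))-\bar\eta(y)\ge d^*(y_0),\qquad\bar\psi(f(y,u))-\bar\psi(y)\ge0.$$ *)

theory Defs
  imports "HOL-Analysis.Analysis"
begin

definition usc_on :: "('y::metric_space) set \<Rightarrow> ('y \<Rightarrow> ('u::metric_space) set) \<Rightarrow> bool" where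
  "usc_on Y U \<longleftrightarrow> (\<forall>y\<in>Y. \<forall>W. open W \<and> U y \<subseteq> W \<longrightarrow>
      (\<exists>\<delta>>0. \<forall>y'\<in>Y. dist y' y < \<delta> \<longrightarrow> U y' \<subseteq> W))"

definition Aset :: "('y \<Rightarrow> 'u set) \<Rightarrow> ('y \<Rightarrow> 'u \<Rightarrow> 'y) \<Rightarrow> 'y set \<Rightarrow> 'y \<Rightarrow> 'u set" where
  "Aset U f Y y = {u \<in> U y. f y u \<in> Y}"

definition Gset :: "('y \<Rightarrow> 'u set) \<Rightarrow> ('y \<Rightarrow> 'u \<Rightarrow> 'y) \<Rightarrow> 'y set \<Rightarrow> ('y \<times> 'u) set" where
  "Gset U f Y = Sigma Y (Aset U f Y)"

primrec traj :: "('y \<Rightarrow> 'u \<Rightarrow> 'y) \<Rightarrow> 'y \<Rightarrow> (nat \<Rightarrow> 'u) \<Rightarrow> nat \<Rightarrow> 'y" where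
  "traj f y0 u 0 = y0"
| "traj f y0 u (Suc t) = f (traj f y0 u t) (u t)"

definition admissible :: "('y \<Rightarrow> 'u set) \<Rightarrow> ('y \<Rightarrow> 'u \<Rightarrow> 'y) \<Rightarrow> 'y set \<Rightarrow> nat \<Rightarrow> 'y \<Rightarrow> (nat \<Rightarrow> 'u) \<Rightarrow> bool" where
  "admissible U f Y T y0 u \<longleftrightarrow> (\<forall>t<T. u t \<in> Aset U f Y (traj f y0 u t))"

text \<open>V_T(y0) = (1/T) min over admissible controls of the accumulated cost
  (the minimum is attained under the standing assumptions, so it equals the infimum).\<close>
definition VT :: "('y \<Rightarrow> 'u set) \<Rightarrow> ('y \<Rightarrow> 'u \<Rightarrow> 'y) \<Rightarrow> ('y \<Rightarrow> 'u \<Rightarrow> real) \<Rightarrow> 'y set \<Rightarrow> nat \<Rightarrow> 'y \<Rightarrow> real" where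
  "VT U f k Y T y0 = (1 / real T) *
     Inf {(\<Sum>t<T. k (traj f y0 u t) (u t)) | u. admissible U f Y T y0 u}"

definition dual_feasible :: "('y::topological_space \<Rightarrow> 'u set) \<Rightarrow> ('y \<Rightarrow> 'u \<Rightarrow> 'y) \<Rightarrow> ('y \<Rightarrow> 'u \<Rightarrow> real) \<Rightarrow> 'y set \<Rightarrow> 'y
     \<Rightarrow> real \<Rightarrow> ('y \<Rightarrow> real) \<Rightarrow> ('y \<Rightarrow> real) \<Rightarrow> bool" where
  "dual_feasible U f k Y y0 \<mu> \<psi> \<eta> \<longleftrightarrow> continuous_on Y \<psi> \<and> continuous_on Y \<eta> \<and>
     (\<forall>(y,u)\<in>Gset U f Y. k y u + \<psi> y0 - \<psi> y + \<eta> (f y u) - \<eta> y - \<mu> \<ge> 0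
                          \<and> \<psi> (f y u) - \<psi> y \<ge> 0)"

definition dstar :: "('y::topological_space \<Rightarrow> 'u set) \<Rightarrow> ('y \<Rightarrow> 'u \<Rightarrow> 'y) \<Rightarrow> ('y \<Rightarrow> 'u \<Rightarrow> real) \<Rightarrow> 'y set \<Rightarrow> 'y \<Rightarrow> real" where
  "dstar U f k Y y0 = Sup {\<mu>. \<exists>\<psi> \<eta>. dual_feasible U f k Y y0 \<mu> \<psi> \<eta>}"

definition dual_optimal :: "('y::topological_space \<Rightarrow> 'u set) \<Rightarrow> ('y \<Rightarrow> 'u \<Rightarrow> 'y) \<Rightarrow> ('y \<Rightarrow> 'u \<Rightarrow> real) \<Rightarrow> 'y set \<Rightarrow> 'y
     \<Rightarrow> ('y \<Rightarrow> real) \<Rightarrow> ('y \<Rightarrow> real) \<Rightarrow> bool" where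
  "dual_optimal U f k Y y0 \<psi> \<eta> \<longleftrightarrow> continuous_on Y \<psi> \<and> continuous_on Y \<eta> \<and>
     (\<forall>(y,u)\<in>Gset U f Y. k y u + \<psi> y0 - \<psi> y + \<eta> (f y u) - \<eta> y \<ge> dstar U f k Y y0
                          \<and> \<psi> (f y u) - \<psi> y \<ge> 0)"

definition min_on_eq :: "'b set \<Rightarrow> ('b \<Rightarrow> real) \<Rightarrow> real \<Rightarrow> bool" where
  "min_on_eq S g c \<longleftrightarrow> (\<exists>p\<in>S. g p = c) \<and> (\<forall>p\<in>S. c \<le> g p)"

end

(* The heart of the matter is strong duality, d*(y0) = V(y0).
   Weak duality: along an admissible trajectory from y0 the two dual inequalities telescope,
   so mu <= V_T(y0) + O(1/T).
   Conversely, fix eps > 0 and penalize the running cost by L * max 0 (V(y0) - V(y)).  For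
   small delta and large L the penalized cost, minus V(y0) - eps, of every delta-chain (a
   sequence in G allowed to miss the dynamics by delta at each step) is bounded below:
   otherwise, cutting the offending chains where their partial sums peak and extracting a
   diagonal subsequence yields an exact trajectory that starts where V >= V(y0) and has
   average cost at most V(y0) - eps.  The value function of delta-chains, made continuous
   by a Lipschitz inf-convolution, is the eta of a feasible triple, and psi = L * min V (V y0)
   absorbs the penalty; so mu = V(y0) - eps is feasible.
   Given d*(y0) = V(y0), part (a) follows since the minimum over the compact set G is itself
   a feasible dual value, and part (b) since V(y) <= V(f(y,u)) on G. *)

theory Submission
  imports Defs "HOL-Library.Diagonal_Subsequence"
begin

lemma usc_on_closed_graph:
  fixes Y :: "'a::metric_space set" and U :: "'a \<Rightarrow> 'u::metric_space set"
  assumes "closed Y" and "usc_on Y U" and "\<And>y. y \<in> Y \<Longrightarrow> closed (U y)"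
  shows "closed (Sigma Y U)"
  unfolding closed_sequential_limits
proof (intro allI impI)
  fix s and l :: "'a \<times> 'u"
  assume "(\<forall>n. s n \<in> Sigma Y U) \<and> s \<longlonglongrightarrow> l"
  then have s: "\<And>n. s n \<in> Sigma Y U" and lim: "s \<longlonglongrightarrow> l" by auto
  obtain y u where l: "l = (y, u)" by fastforce
  have ylim: "(\<lambda>n. fst (s n)) \<longlonglongrightarrow> y" and ulim: "(\<lambda>n. snd (s n)) \<longlonglongrightarrow> u"
    using tendsto_fst[OF lim] tendsto_snd[OF lim] by (simp_all add: l)
  have s': "fst (s n) \<in> Y" "snd (s n) \<in> U (fst (s n))" for n
    using s[of n] by (auto elim!: SigmaE)
  have y: "y \<in> Y"
    using closed_sequentially[OF assms(1) _ ylim] s' by blast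
  have "u \<in> U y"
  proof (rule ccontr)
    assume "u \<notin> U y"
    have "open (- U y)" using assms(3)[OF y] by auto
    then have "\<forall>x\<in>- U y. \<exists>e>0. cball x e \<subseteq> - U y" by (simp only: open_contains_cball)
    with \<open>u \<notin> U y\<close> obtain e where "e > 0" and e: "cball u e \<subseteq> - U y" by blast
    have usc: "\<And>W. open W \<Longrightarrow> U y \<subseteq> W \<Longrightarrow> \<exists>d>0. \<forall>y'\<in>Y. dist y' y < d \<longrightarrow> U y' \<subseteq> W"
      using assms(2) y unfolding usc_on_def by blast
    have "open (- cball u e)" and "U y \<subseteq> - cball u e" using e by auto
    then obtain d where "d > 0" and d: "\<forall>y'\<in>Y. dist y' y < d \<longrightarrow> U y' \<subseteq> - cball u e"
      using usc by blast
    obtain n where "dist (fst (s n)) y < d" and "dist (snd (s n)) u < e"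
      using eventually_conj[OF tendstoD[OF ylim \<open>d > 0\<close>] tendstoD[OF ulim \<open>e > 0\<close>]]
      by (auto simp: eventually_sequentially)
    then have "snd (s n) \<in> - cball u e" using d s'[of n] by blast
    with \<open>dist (snd (s n)) u < e\<close> show False by (simp add: dist_commute)
  qed
  with y show "l \<in> Sigma Y U" by (simp add: l)
qed

lemma compact_Gset:
  assumes "compact Y" and "compact U0" and "\<And>y. y \<in> Y \<Longrightarrow> U y \<subseteq> U0"
    and "\<And>y. y \<in> Y \<Longrightarrow> closed (U y)" and "usc_on Y U"
    and f: "continuous_on (UNIV \<times> U0) (\<lambda>(y, u). f y u)"
  shows "compact (Gset U f Y)"
proof -
  have graph: "Sigma Y U \<subseteq> Y \<times> U0" using assms(3) by blast
  have G_eq: "Gset U f Y = (Y \<times> U0) \<inter> (Sigma Y U \<inter> (\<lambda>(y, u). f y u) -` Y)"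
    unfolding Gset_def Aset_def by (auto intro: assms(3)[THEN subsetD])
  have "closed (Sigma Y U)"
    using usc_on_closed_graph compact_imp_closed assms(1,4,5) by blast
  then have "closed (Sigma Y U \<inter> (\<lambda>(y, u). f y u) -` Y)"
    using continuous_on_subset[OF f] graph compact_imp_closed[OF assms(1)]
    by (intro continuous_closed_preimage) auto
  then show ?thesis
    unfolding G_eq using compact_Int_closed compact_Times assms(1,2) by blast
qed

lemma diagonal_subsequence_converges:
  fixes p :: "nat \<Rightarrow> nat \<Rightarrow> 'a::metric_space"
  assumes "compact K" and "\<And>j t. p j t \<in> K"
  obtains r q where "strict_mono r" and "\<And>t. q t \<in> K" and "\<And>t. (\<lambda>i. p (r i) t) \<longlonglongrightarrow> q t"
proof -
  interpret subseqs "\<lambda>t s. \<exists>l\<in>K. (\<lambda>i. p (s i) t) \<longlonglongrightarrow> l"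
  proof
    fix t and s :: "nat \<Rightarrow> nat"
    obtain l r where "l \<in> K" "strict_mono r" "((\<lambda>i. p (s i) t) \<circ> r) \<longlonglongrightarrow> l"
      using assms unfolding compact_eq_seq_compact_metric seq_compact_def by meson
    then show "\<exists>r. strict_mono r \<and> (\<exists>l\<in>K. (\<lambda>i. p ((s \<circ> r) i) t) \<longlonglongrightarrow> l)"
      by (auto simp: o_def)
  qed
  have "\<exists>l\<in>K. (\<lambda>i. p (diagseq i) t) \<longlonglongrightarrow> l" for t
  proof -
    have stable: "strict_mono r \<Longrightarrow> \<exists>l\<in>K. (\<lambda>i. p (s i) n) \<longlonglongrightarrow> l
        \<Longrightarrow> \<exists>l\<in>K. (\<lambda>i. p ((s \<circ> r) i) n) \<longlonglongrightarrow> l" for r s n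
    proof -
      assume "strict_mono r" and "\<exists>l\<in>K. (\<lambda>i. p (s i) n) \<longlonglongrightarrow> l"
      then obtain l where "l \<in> K" and "((\<lambda>i. p (s i) n) \<circ> r) \<longlonglongrightarrow> l"
        using LIMSEQ_subseq_LIMSEQ by blast
      then show ?thesis by (auto simp: o_def)
    qed
    from diagseq_holds[OF stable, of t] obtain l
      where "l \<in> K" and "(\<lambda>i. p (diagseq (Suc t + i)) t) \<longlonglongrightarrow> l"
      by (auto simp: o_def)
    moreover from this(2) have "(\<lambda>i. p (diagseq (i + Suc t)) t) \<longlonglongrightarrow> l"
      by (simp add: add.commute)
    ultimately show ?thesis using LIMSEQ_offset[of "\<lambda>i. p (diagseq i) t" "Suc t"] by blast
  qed
  then have "\<forall>t. \<exists>l. l \<in> K \<and> (\<lambda>i. p (diagseq i) t) \<longlonglongrightarrow> l" by blast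
  from choice[OF this] obtain q where "\<forall>t. q t \<in> K \<and> (\<lambda>i. p (diagseq i) t) \<longlonglongrightarrow> q t" ..
  with subseq_diagseq that show ?thesis by blast
qed

lemma nonpos_partial_sums_window:
  fixes a :: "nat \<Rightarrow> real"
  assumes "K > 0" and "\<And>t. t < T \<Longrightarrow> - K \<le> a t" and "(\<Sum>t<T. a t) < - (real j * K)"
  obtains s where "s + j < T" and "\<And>m. s + m \<le> T \<Longrightarrow> (\<Sum>t<m. a (s + t)) \<le> 0"
proof -
  define S where "S n = (\<Sum>t<n. a t)" for n
  have split: "S (s + m) = S s + (\<Sum>t<m. a (s + t))" for s m
    unfolding S_def by (induction m) auto
  \<comment> \<open>Start the window where the partial sums peak.\<close>
  obtain s where "s \<le> T" and s: "S s = Max (S ` {..T})"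
    using Max_in[of "S ` {..T}"] by fastforce
  have peak: "n \<le> T \<Longrightarrow> S n \<le> S s" for n
    unfolding s by (simp add: Max_ge)
  have "- (real (T - s) * K) \<le> (\<Sum>t<T - s. a (s + t))"
    using sum_mono[of "{..<T - s}" "\<lambda>_. - K" "\<lambda>t. a (s + t)"] assms(2) by force
  also have "\<dots> = S T - S s" using split[of s "T - s"] \<open>s \<le> T\<close> by simp
  also have "\<dots> < - (real j * K)"
    using assms(3) peak[of 0] by (simp add: S_def)
  finally have "j < T - s" using \<open>K > 0\<close> by (simp add: mult_less_cancel_right)
  show ?thesis
  proof (rule that)
    show "s + j < T" using \<open>j < T - s\<close> by linarith
    fix m assume "s + m \<le> T"
    then show "(\<Sum>t<m. a (s + t)) \<le> 0" using peak[of "s + m"] split[of s m] by simp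
  qed
qed

definition inf_convolution :: "real \<Rightarrow> ('a::metric_space \<Rightarrow> real) \<Rightarrow> 'a \<Rightarrow> real" where
  "inf_convolution L \<phi> x = Inf (range (\<lambda>w. \<phi> w + L * dist x w))"

lemma inf_convolution_greatest:
  "(\<And>w. a \<le> \<phi> w + L * dist x w) \<Longrightarrow> a \<le> inf_convolution L \<phi> x"
  unfolding inf_convolution_def by (rule cInf_greatest) auto

context
  fixes \<phi> :: "'a::metric_space \<Rightarrow> real" and L b :: real
  assumes lower: "\<And>w. b \<le> \<phi> w" and L: "0 \<le> L"
begin

lemma inf_convolution_le: "inf_convolution L \<phi> x \<le> \<phi> w + L * dist x w"
proof -
  have "bdd_below (range (\<lambda>w. \<phi> w + L * dist x w))"
    using lower L by (intro bdd_belowI[of _ b]) (auto intro!: add_increasing2)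
  then show ?thesis unfolding inf_convolution_def by (intro cInf_lower) auto
qed

lemma lipschitz_on_inf_convolution: "L-lipschitz_on S (inf_convolution L \<phi>)"
proof -
  have shift: "inf_convolution L \<phi> x \<le> inf_convolution L \<phi> x' + L * dist x x'" for x x'
  proof -
    have "inf_convolution L \<phi> x - L * dist x x' \<le> \<phi> w + L * dist x' w" for w
    proof -
      have "L * dist x w \<le> L * dist x x' + L * dist x' w"
        using mult_left_mono[OF dist_triangle[of x w x'] L] by (simp add: distrib_left)
      then show ?thesis using inf_convolution_le[of x w] by linarith
    qed
    then have "inf_convolution L \<phi> x - L * dist x x' \<le> inf_convolution L \<phi> x'"
      by (rule inf_convolution_greatest)
    then show ?thesis by simp
  qed
  show ?thesis
  proof (rule lipschitz_onI[OF _ L])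
    fix x x'
    show "dist (inf_convolution L \<phi> x) (inf_convolution L \<phi> x') \<le> L * dist x x'"
      using shift[of x x'] shift[of x' x] by (simp add: dist_real_def dist_commute abs_le_iff)
  qed
qed

end

locale control_system =
  fixes Y :: "'a::metric_space set" and U0 :: "'u::metric_space set"
    and U :: "'a \<Rightarrow> 'u set" and f :: "'a \<Rightarrow> 'u \<Rightarrow> 'a" and k :: "'a \<Rightarrow> 'u \<Rightarrow> real"
  assumes Y_compact: "compact Y" and U0_compact: "compact U0"
    and U_subset: "\<And>y. y \<in> Y \<Longrightarrow> U y \<subseteq> U0"
    and U_closed: "\<And>y. y \<in> Y \<Longrightarrow> closed (U y)"
    and U_usc: "usc_on Y U"
    and f_cont: "continuous_on (UNIV \<times> U0) (\<lambda>(y, u). f y u)"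
    and k_cont: "continuous_on (UNIV \<times> U0) (\<lambda>(y, u). k y u)"
    and A_nonempty: "\<And>y. y \<in> Y \<Longrightarrow> Aset U f Y y \<noteq> {}"
begin

abbreviation G :: "('a \<times> 'u) set" where
  "G \<equiv> Gset U f Y"

lemma mem_G_iff: "(y, u) \<in> G \<longleftrightarrow> y \<in> Y \<and> u \<in> U y \<and> f y u \<in> Y"
  by (simp add: Gset_def Aset_def)

lemma G_subset: "G \<subseteq> Y \<times> U0"
proof
  fix p assume "p \<in> G"
  then obtain y u where "p = (y, u)" and "y \<in> Y" and "u \<in> U y"
    by (auto simp: Gset_def Aset_def)
  then show "p \<in> Y \<times> U0" using U_subset by blast
qed

lemma compact_G: "compact G"
  by (rule compact_Gset[OF Y_compact U0_compact U_subset U_closed U_usc f_cont])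

lemma G_nonempty: "Y \<noteq> {} \<Longrightarrow> G \<noteq> {}"
  using A_nonempty by (auto simp: Gset_def)

lemma continuous_on_k_G: "continuous_on G (\<lambda>(y, u). k y u)"
  using continuous_on_subset[OF k_cont] G_subset by blast

lemma continuous_on_f_G: "continuous_on G (\<lambda>(y, u). f y u)"
  using continuous_on_subset[OF f_cont] G_subset by blast

definition cost_bound :: real where
  "cost_bound = Sup ((\<lambda>(y, u). \<bar>k y u\<bar>) ` G)"

lemma abs_k_le_cost_bound:
  assumes "(y, u) \<in> G" shows "\<bar>k y u\<bar> \<le> cost_bound"
proof -
  have "continuous_on G (\<lambda>(y, u). \<bar>k y u\<bar>)"
    using continuous_on_rabs[OF continuous_on_k_G] by (simp add: case_prod_beta)
  then have "bdd_above ((\<lambda>(y, u). \<bar>k y u\<bar>) ` G)"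
    using compact_G by (intro bounded_imp_bdd_above compact_imp_bounded compact_continuous_image)
  moreover have "\<bar>k y u\<bar> \<in> (\<lambda>(y, u). \<bar>k y u\<bar>) ` G"
    using assms by (rule rev_image_eqI) simp
  ultimately show ?thesis
    unfolding cost_bound_def by (intro cSup_upper)
qed

lemma cost_bound_nonneg:
  assumes "G \<noteq> {}" shows "0 \<le> cost_bound"
proof -
  obtain y u where "(y, u) \<in> G" using assms by auto
  then show ?thesis using abs_k_le_cost_bound[of y u] abs_ge_zero[of "k y u"] by linarith
qed

definition opt_cost :: "nat \<Rightarrow> 'a \<Rightarrow> real" where
  "opt_cost T y = Inf {(\<Sum>t<T. k (traj f y u t) (u t)) | u. admissible U f Y T y u}"

lemma VT_eq_opt_cost: "VT U f k Y T y = opt_cost T y / real T"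
  by (simp add: VT_def opt_cost_def)

lemma opt_cost_0: "opt_cost 0 y = 0"
proof -
  have "{(\<Sum>t<0. k (traj f y u t) (u t)) | u. admissible U f Y 0 y u} = {0}"
    by (auto simp: admissible_def)
  then show ?thesis by (simp add: opt_cost_def)
qed

lemma opt_cost_eq_VT: "opt_cost T y = real T * VT U f k Y T y"
  by (cases "T = 0") (simp_all add: VT_eq_opt_cost opt_cost_0)

lemma traj_in_Y:
  assumes "y \<in> Y" and "admissible U f Y T y u" and "t \<le> T"
  shows "traj f y u t \<in> Y"
  using assms(3)
proof (induction t)
  case (Suc t)
  then have "u t \<in> Aset U f Y (traj f y u t)"
    using assms(2) by (simp add: admissible_def)
  then show ?case by (simp add: Aset_def)
qed (use assms(1) in simp)

lemma traj_in_G: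
  "y \<in> Y \<Longrightarrow> admissible U f Y T y u \<Longrightarrow> t < T \<Longrightarrow> (traj f y u t, u t) \<in> G"
  using traj_in_Y[of y T u t] by (auto simp: admissible_def Gset_def)

lemma admissible_control_exists:
  assumes "y \<in> Y" shows "\<exists>u. \<forall>T. admissible U f Y T y u"
proof -
  have "\<forall>z\<in>Y. \<exists>v. v \<in> Aset U f Y z"
    using A_nonempty by blast
  from bchoice[OF this] obtain sel where sel: "\<forall>z\<in>Y. sel z \<in> Aset U f Y z" ..
  define z where "z = rec_nat y (\<lambda>_ z. f z (sel z))"
  have z_in_Y: "z t \<in> Y" for t
    by (induction t) (use assms sel in \<open>auto simp: z_def Aset_def\<close>)
  have "traj f y (sel \<circ> z) t = z t" for t
    by (induction t) (simp_all add: z_def)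
  then show ?thesis
    using sel z_in_Y by (intro exI[of _ "sel \<circ> z"]) (auto simp: admissible_def)
qed

lemma sum_cost_lower_bound:
  assumes "y \<in> Y" and "admissible U f Y T y u"
  shows "- (real T * cost_bound) \<le> (\<Sum>t<T. k (traj f y u t) (u t))"
proof -
  have "- cost_bound \<le> k (traj f y u t) (u t)" if "t < T" for t
    using abs_k_le_cost_bound[OF traj_in_G[OF assms that]] by linarith
  then show ?thesis using sum_bounded_below[of "{..<T}" "- cost_bound"] by simp
qed

lemma opt_cost_le:
  assumes "y \<in> Y" and "admissible U f Y T y u"
  shows "opt_cost T y \<le> (\<Sum>t<T. k (traj f y u t) (u t))"
proof -
  have "bdd_below {(\<Sum>t<T. k (traj f y u t) (u t)) | u. admissible U f Y T y u}"
    using sum_cost_lower_bound[OF assms(1)] by (auto intro!: bdd_belowI[of _ "- (real T * cost_bound)"])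
  then show ?thesis
    unfolding opt_cost_def using assms(2) by (intro cInf_lower) auto
qed

lemma opt_cost_greatest:
  assumes "y \<in> Y" and "\<And>u. admissible U f Y T y u \<Longrightarrow> b \<le> (\<Sum>t<T. k (traj f y u t) (u t))"
  shows "b \<le> opt_cost T y"
  unfolding opt_cost_def using assms admissible_control_exists[of y] by (intro cInf_greatest) auto

lemma traj_case_nat: "traj f y (case_nat v u) (Suc t) = traj f (f y v) u t"
  by (induction t) auto

lemma opt_cost_Suc_le:
  assumes "(y, v) \<in> G" shows "opt_cost (Suc T) y \<le> k y v + opt_cost T (f y v)"
proof -
  have "y \<in> Y" and "f y v \<in> Y" and v: "v \<in> Aset U f Y y"
    using assms by (auto simp: mem_G_iff Aset_def)
  have "opt_cost (Suc T) y - k y v \<le> opt_cost T (f y v)"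
  proof (rule opt_cost_greatest[OF \<open>f y v \<in> Y\<close>])
    fix u assume u: "admissible U f Y T (f y v) u"
    have "admissible U f Y (Suc T) y (case_nat v u)"
      unfolding admissible_def
    proof (intro allI impI)
      fix t assume "t < Suc T"
      then show "case_nat v u t \<in> Aset U f Y (traj f y (case_nat v u) t)"
        using u v by (cases t) (auto simp: admissible_def traj_case_nat simp del: traj.simps(2))
    qed
    then have "opt_cost (Suc T) y \<le> (\<Sum>t<Suc T. k (traj f y (case_nat v u) t) (case_nat v u t))"
      by (rule opt_cost_le[OF \<open>y \<in> Y\<close>])
    also have "\<dots> = k y v + (\<Sum>t<T. k (traj f (f y v) u t) (u t))"
      by (subst sum.lessThan_Suc_shift) (simp add: traj_case_nat del: traj.simps(2))
    finally show "opt_cost (Suc T) y - k y v \<le> (\<Sum>t<T. k (traj f (f y v) u t) (u t))"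
      by simp
  qed
  then show ?thesis by simp
qed

definition delta_chain :: "real \<Rightarrow> (nat \<Rightarrow> 'a) \<Rightarrow> (nat \<Rightarrow> 'u) \<Rightarrow> nat \<Rightarrow> bool" where
  "delta_chain \<delta> z u T \<longleftrightarrow> (\<forall>t<T. (z t, u t) \<in> G) \<and>
     (\<forall>t. Suc t < T \<longrightarrow> dist (z (Suc t)) (f (z t) (u t)) \<le> \<delta>)"

lemma delta_chain_Nil: "delta_chain \<delta> z u 0"
  by (simp add: delta_chain_def)

lemma delta_chain_Cons:
  assumes "(y, v) \<in> G" and "dist (z 0) (f y v) \<le> \<delta>" and "delta_chain \<delta> z u T"
  shows "delta_chain \<delta> (case_nat y z) (case_nat v u) (Suc T)"
  using assms unfolding delta_chain_def by (auto simp: less_Suc_eq_0_disj split: nat.split)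

lemma delta_chain_shift:
  assumes "delta_chain \<delta> z u T" and "s + N \<le> T"
  shows "delta_chain \<delta> (\<lambda>t. z (s + t)) (\<lambda>t. u (s + t)) N"
  unfolding delta_chain_def
proof (intro conjI allI impI)
  fix t assume "t < N"
  then have "s + t < T" using assms(2) by linarith
  then show "(z (s + t), u (s + t)) \<in> G" using assms(1) unfolding delta_chain_def by blast
next
  fix t assume "Suc t < N"
  then have "Suc (s + t) < T" using assms(2) by linarith
  then show "dist (z (s + Suc t)) (f (z (s + t)) (u (s + t))) \<le> \<delta>"
    using assms(1) unfolding delta_chain_def by simp
qed

lemma shrinking_delta_chains_converge:
  assumes chain: "\<And>j. delta_chain (1 / (real j + 1)) (z j) (u j) (N j)" and long: "\<And>j. j < N j"
  obtains r z' u' where "strict_mono r" and "\<And>t. (z' t, u' t) \<in> G"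
    and "\<And>t. z' (Suc t) = f (z' t) (u' t)"
    and "\<And>t. (\<lambda>i. z (r i) t) \<longlonglongrightarrow> z' t" and "\<And>t. (\<lambda>i. u (r i) t) \<longlonglongrightarrow> u' t"
proof -
  have zG: "t < N j \<Longrightarrow> (z j t, u j t) \<in> G" for j t
    using chain[of j] by (simp add: delta_chain_def)
  then obtain g0 where "g0 \<in> G" using long[of 0] by blast
  \<comment> \<open>Pad the chains to infinite sequences in the compact set G.\<close>
  define p where "p j t = (if t < N j then (z j t, u j t) else g0)" for j t
  have pG: "p j t \<in> G" for j t
    using zG \<open>g0 \<in> G\<close> by (simp add: p_def)
  obtain r q where r: "strict_mono r" and qG: "\<And>t. q t \<in> G" and qlim: "\<And>t. (\<lambda>i. p (r i) t) \<longlonglongrightarrow> q t"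
    using diagonal_subsequence_converges[OF compact_G, of p] pG by blast
  have long_r: "t < N (r i)" if "t \<le> i" for i t
    using seq_suble[OF r, of i] long[of "r i"] that by linarith
  have inG: "\<forall>\<^sub>F i in sequentially. (z (r i) t, u (r i) t) \<in> G" for t
    using zG long_r by (intro eventually_sequentiallyI[of t]) blast
  have pair_lim: "(\<lambda>i. (z (r i) t, u (r i) t)) \<longlonglongrightarrow> q t" for t
  proof (rule Lim_transform_eventually[OF qlim])
    show "\<forall>\<^sub>F i in sequentially. p (r i) t = (z (r i) t, u (r i) t)"
      using long_r by (intro eventually_sequentiallyI[of t]) (simp add: p_def)
  qed
  define z' where "z' t = fst (q t)" for t
  define u' where "u' t = snd (q t)" for t
  have zlim: "(\<lambda>i. z (r i) t) \<longlonglongrightarrow> z' t" and ulim: "(\<lambda>i. u (r i) t) \<longlonglongrightarrow> u' t" for t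
    using tendsto_fst[OF pair_lim] tendsto_snd[OF pair_lim] by (simp_all add: z'_def u'_def)
  have "z' (Suc t) = f (z' t) (u' t)" for t
  proof -
    have f_lim: "(\<lambda>i. f (z (r i) t) (u (r i) t)) \<longlonglongrightarrow> f (z' t) (u' t)"
      using continuous_on_tendsto_compose[OF continuous_on_f_G pair_lim qG inG]
      by (simp add: z'_def u'_def case_prod_beta)
    have "(\<lambda>i. 1 / (real i + 1)) \<longlonglongrightarrow> 0"
      using LIMSEQ_inverse_real_of_nat by (simp add: inverse_eq_divide add.commute)
    moreover have "(\<lambda>i. dist (z (r i) (Suc t)) (f (z (r i) t) (u (r i) t)))
        \<longlonglongrightarrow> dist (z' (Suc t)) (f (z' t) (u' t))"
      by (intro tendsto_dist zlim f_lim)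
    moreover have "\<forall>\<^sub>F i in sequentially. dist (z (r i) (Suc t)) (f (z (r i) t) (u (r i) t)) \<le> 1 / (real i + 1)"
    proof (rule eventually_sequentiallyI[of "Suc t"])
      fix i assume "Suc t \<le> i"
      then have "dist (z (r i) (Suc t)) (f (z (r i) t) (u (r i) t)) \<le> 1 / (real (r i) + 1)"
        using chain[of "r i"] long_r[of "Suc t" i] by (simp add: delta_chain_def)
      also have "\<dots> \<le> 1 / (real i + 1)"
        using seq_suble[OF r, of i] by (simp add: frac_le)
      finally show "dist (z (r i) (Suc t)) (f (z (r i) t) (u (r i) t)) \<le> 1 / (real i + 1)" .
    qed
    ultimately have "dist (z' (Suc t)) (f (z' t) (u' t)) \<le> 0"
      by (rule tendsto_le[OF trivial_limit_sequentially])
    then show ?thesis by simp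
  qed
  moreover have "(z' t, u' t) \<in> G" for t
    using qG[of t] by (simp add: z'_def u'_def)
  ultimately show ?thesis using that r zlim ulim by blast
qed

definition chain_value :: "real \<Rightarrow> ('a \<Rightarrow> 'u \<Rightarrow> real) \<Rightarrow> 'a \<Rightarrow> real" where
  "chain_value \<delta> h w = Inf {(\<Sum>t<T. h (z t) (u t)) | z u T. delta_chain \<delta> z u T \<and> z 0 = w}"

context
  fixes \<delta> B :: real and h :: "'a \<Rightarrow> 'u \<Rightarrow> real"
  assumes chain_cost_ge: "\<And>z u T. delta_chain \<delta> z u T \<Longrightarrow> - B \<le> (\<Sum>t<T. h (z t) (u t))"
begin

lemma chain_value_le:
  "delta_chain \<delta> z u T \<Longrightarrow> chain_value \<delta> h (z 0) \<le> (\<Sum>t<T. h (z t) (u t))"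
  unfolding chain_value_def
  by (rule cInf_lower) (blast, auto intro!: bdd_belowI[of _ "- B"] chain_cost_ge)

lemma chain_value_nonpos: "chain_value \<delta> h w \<le> 0"
  using chain_value_le[OF delta_chain_Nil, of "\<lambda>_. w"] by simp

lemma chain_value_ge: "- B \<le> chain_value \<delta> h w"
  unfolding chain_value_def
proof (rule cInf_greatest)
  show "{(\<Sum>t<T. h (z t) (u t)) | z u T. delta_chain \<delta> z u T \<and> z 0 = w} \<noteq> {}"
    using delta_chain_Nil[of \<delta> "\<lambda>_. w"] by blast
qed (use chain_cost_ge in blast)

lemma chain_value_step:
  assumes "(y, v) \<in> G" and "dist w (f y v) \<le> \<delta>"
  shows "chain_value \<delta> h y \<le> h y v + chain_value \<delta> h w"
proof -
  have "chain_value \<delta> h y - h y v \<le> chain_value \<delta> h w"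
    unfolding chain_value_def[of \<delta> h w]
  proof (rule cInf_greatest)
    show "{(\<Sum>t<T. h (z t) (u t)) | z u T. delta_chain \<delta> z u T \<and> z 0 = w} \<noteq> {}"
      using delta_chain_Nil[of \<delta> "\<lambda>_. w"] by blast
    fix s assume "s \<in> {(\<Sum>t<T. h (z t) (u t)) | z u T. delta_chain \<delta> z u T \<and> z 0 = w}"
    then obtain z u T where s: "s = (\<Sum>t<T. h (z t) (u t))" and "delta_chain \<delta> z u T" and "z 0 = w"
      by blast
    then have "delta_chain \<delta> (case_nat y z) (case_nat v u) (Suc T)"
      using delta_chain_Cons assms by simp
    then have "chain_value \<delta> h y \<le> (\<Sum>t<Suc T. h (case_nat y z t) (case_nat v u t))"
      using chain_value_le by fastforce
    also have "\<dots> = h y v + s"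
      unfolding s by (subst sum.lessThan_Suc_shift) simp
    finally show "chain_value \<delta> h y - h y v \<le> s" by simp
  qed
  then show ?thesis by simp
qed

end

lemma continuous_subsolution_from_chain_costs:
  fixes h :: "'a \<Rightarrow> 'u \<Rightarrow> real"
  assumes "\<delta> > 0" and chain_cost_ge: "\<And>z u T. delta_chain \<delta> z u T \<Longrightarrow> - B \<le> (\<Sum>t<T. h (z t) (u t))"
    and h_ge: "\<And>y v. (y, v) \<in> G \<Longrightarrow> - K \<le> h y v" and "0 \<le> K"
  obtains \<eta> where "continuous_on Y \<eta>" and "\<And>y v. (y, v) \<in> G \<Longrightarrow> \<eta> y \<le> h y v + \<eta> (f y v)"
proof -
  define \<Phi> where "\<Phi> = chain_value \<delta> h"
  have \<Phi>_le: "\<Phi> w \<le> 0" for w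
    unfolding \<Phi>_def by (rule chain_value_nonpos[OF chain_cost_ge])
  have \<Phi>_ge: "- B \<le> \<Phi> w" for w
    unfolding \<Phi>_def by (rule chain_value_ge[OF chain_cost_ge])
  \<comment> \<open>The Lipschitz constant is chosen so that a jump of length at least \<open>\<delta>\<close> costs more than the
    whole range \<open>B\<close> of \<open>\<Phi>\<close> plus the bound \<open>K\<close> on the running cost.\<close>
  define L where "L = (B + K) / \<delta>"
  have "0 \<le> B" using \<Phi>_le \<Phi>_ge by (meson order_trans neg_le_0_iff_le)
  then have "0 \<le> L" and L\<delta>: "L * \<delta> = B + K"
    using \<open>0 \<le> K\<close> \<open>\<delta> > 0\<close> by (simp_all add: L_def)
  define \<eta> where "\<eta> = inf_convolution L \<Phi>"
  have \<eta>_le: "\<eta> x \<le> \<Phi> w + L * dist x w" for x w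
    unfolding \<eta>_def by (rule inf_convolution_le[OF \<Phi>_ge \<open>0 \<le> L\<close>])
  show ?thesis
  proof
    show "continuous_on Y \<eta>"
      unfolding \<eta>_def by (rule lipschitz_on_continuous_on[OF lipschitz_on_inf_convolution[OF \<Phi>_ge \<open>0 \<le> L\<close>]])
  next
    fix y v assume yv: "(y, v) \<in> G"
    have "\<eta> y \<le> \<Phi> y" using \<eta>_le[of y y] by simp
    have gap: "\<eta> y - h y v \<le> \<Phi> w + L * dist (f y v) w" for w
    proof (cases "dist w (f y v) \<le> \<delta>")
      case True
      have "\<Phi> y \<le> h y v + \<Phi> w"
        unfolding \<Phi>_def by (rule chain_value_step[OF chain_cost_ge yv True])
      moreover have "0 \<le> L * dist (f y v) w" using \<open>0 \<le> L\<close> by simp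
      ultimately show ?thesis using \<open>\<eta> y \<le> \<Phi> y\<close> by linarith
    next
      case False
      then have "L * \<delta> \<le> L * dist (f y v) w"
        using \<open>0 \<le> L\<close> by (intro mult_left_mono) (auto simp: dist_commute)
      then show ?thesis
        using L\<delta> \<open>\<eta> y \<le> \<Phi> y\<close> \<Phi>_le[of y] \<Phi>_ge[of w] h_ge[OF yv] by linarith
    qed
    have "\<eta> y - h y v \<le> inf_convolution L \<Phi> (f y v)"
      by (rule inf_convolution_greatest) (rule gap)
    then show "\<eta> y \<le> h y v + \<eta> (f y v)" by (simp add: \<eta>_def)
  qed
qed

end

locale control_system_with_limit_value = control_system +
  fixes V :: "'a \<Rightarrow> real"
  assumes V_lim: "\<And>y. y \<in> Y \<Longrightarrow> (\<lambda>T. VT U f k Y T y) \<longlonglongrightarrow> V y"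
    and V_cont: "continuous_on Y V"
begin

lemma V_le_V_successor:
  assumes "(y, v) \<in> G" shows "V y \<le> V (f y v)"
proof -
  have "y \<in> Y" and "f y v \<in> Y" using assms by (simp_all add: mem_G_iff)
  have bellman: "VT U f k Y (Suc T) y
      \<le> k y v / real (Suc T) + real T / real (Suc T) * VT U f k Y T (f y v)" for T
  proof -
    have "VT U f k Y (Suc T) y = opt_cost (Suc T) y / real (Suc T)"
      by (rule VT_eq_opt_cost)
    also have "\<dots> \<le> (k y v + real T * VT U f k Y T (f y v)) / real (Suc T)"
    proof (rule divide_right_mono)
      show "opt_cost (Suc T) y \<le> k y v + real T * VT U f k Y T (f y v)"
        using opt_cost_Suc_le[OF assms, of T] by (simp only: opt_cost_eq_VT[of T "f y v"])
    qed simp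
    also have "\<dots> = k y v / real (Suc T) + real T / real (Suc T) * VT U f k Y T (f y v)"
      by (simp add: add_divide_distrib)
    finally show ?thesis .
  qed
  have "(\<lambda>T. VT U f k Y (Suc T) y) \<longlonglongrightarrow> V y"
    using V_lim[OF \<open>y \<in> Y\<close>] by (rule LIMSEQ_Suc)
  moreover have "(\<lambda>T. k y v / real (Suc T) + real T / real (Suc T) * VT U f k Y T (f y v))
      \<longlonglongrightarrow> 0 + 1 * V (f y v)"
    by (intro tendsto_add tendsto_mult LIMSEQ_n_over_Suc_n V_lim[OF \<open>f y v \<in> Y\<close>]
        LIMSEQ_Suc[OF lim_const_over_n])
  ultimately have "V y \<le> 0 + 1 * V (f y v)"
    by (rule LIMSEQ_le) (use bellman in auto)
  then show ?thesis by simp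
qed

lemma V_le_of_average_cost_le:
  assumes "y \<in> Y" and adm: "\<And>T. admissible U f Y T y u"
    and cost: "\<And>T. (\<Sum>t<T. k (traj f y u t) (u t)) \<le> real T * c"
  shows "V y \<le> c"
proof (rule LIMSEQ_le_const2[OF V_lim[OF assms(1)]], intro exI[of _ 1] allI impI)
  fix T :: nat assume "1 \<le> T"
  then have "0 < real T" by simp
  have "opt_cost T y \<le> real T * c"
    using opt_cost_le[OF assms(1) adm] cost by (rule order.trans)
  with \<open>0 < real T\<close> show "VT U f k Y T y \<le> c"
    by (simp add: VT_eq_opt_cost pos_divide_le_eq mult.commute)
qed

lemma weak_duality:
  assumes "y0 \<in> Y" and feasible: "dual_feasible U f k Y y0 \<mu> \<psi> \<eta>"
  shows "\<mu> \<le> V y0"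
proof -
  have \<eta>_cont: "continuous_on Y \<eta>"
    using feasible by (simp add: dual_feasible_def)
  have ineqs: "0 \<le> k y v + \<psi> y0 - \<psi> y + \<eta> (f y v) - \<eta> y - \<mu>" "\<psi> y \<le> \<psi> (f y v)"
    if "(y, v) \<in> G" for y v
    using feasible that unfolding dual_feasible_def by fastforce+
  obtain M where M: "\<And>y. y \<in> Y \<Longrightarrow> \<bar>\<eta> y\<bar> \<le> M"
  proof -
    have "bounded (\<eta> ` Y)"
      by (rule compact_imp_bounded[OF compact_continuous_image[OF \<eta>_cont Y_compact]])
    then obtain M where "\<forall>x\<in>\<eta> ` Y. norm x \<le> M" unfolding bounded_iff by blast
    then show ?thesis using that by auto
  qed
  \<comment> \<open>Along an admissible trajectory \<open>\<psi>\<close> does not decrease, so the cost dominates \<open>\<mu>\<close>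
    up to a telescoping difference of \<open>\<eta>\<close>.\<close>
  have low: "real T * \<mu> - 2 * M \<le> opt_cost T y0" for T
  proof (rule opt_cost_greatest[OF assms(1)])
    fix u assume adm: "admissible U f Y T y0 u"
    define z where "z t = traj f y0 u t" for t
    have zG: "t < T \<Longrightarrow> (z t, u t) \<in> G" for t
      using traj_in_G[OF assms(1) adm] by (simp add: z_def)
    have z_Suc: "z (Suc t) = f (z t) (u t)" for t
      by (simp add: z_def)
    have \<psi>_mono: "t \<le> T \<Longrightarrow> \<psi> y0 \<le> \<psi> (z t)" for t
    proof (induction t)
      case 0
      then show ?case by (simp add: z_def)
    next
      case (Suc t)
      then show ?case using ineqs(2)[OF zG[of t]] by (simp add: z_Suc)
    qed
    have step: "\<mu> - (\<eta> (z (Suc t)) - \<eta> (z t)) \<le> k (z t) (u t)" if "t < T" for t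
      using ineqs(1)[OF zG[OF that]] \<psi>_mono[of t] that unfolding z_Suc by simp
    have "real T * \<mu> - (\<eta> (z T) - \<eta> (z 0)) = (\<Sum>t<T. \<mu> - (\<eta> (z (Suc t)) - \<eta> (z t)))"
      by (induction T) (simp_all add: algebra_simps)
    also have "\<dots> \<le> (\<Sum>t<T. k (z t) (u t))"
      using step by (intro sum_mono) simp
    finally have "real T * \<mu> - (\<eta> (z T) - \<eta> (z 0)) \<le> (\<Sum>t<T. k (z t) (u t))" .
    moreover have "\<bar>\<eta> (z T)\<bar> \<le> M" and "\<bar>\<eta> (z 0)\<bar> \<le> M"
      using M traj_in_Y[OF assms(1) adm] assms(1) by (simp_all add: z_def)
    ultimately have "real T * \<mu> - 2 * M \<le> (\<Sum>t<T. k (z t) (u t))" by linarith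
    then show "real T * \<mu> - 2 * M \<le> (\<Sum>t<T. k (traj f y0 u t) (u t))"
      by (simp add: z_def)
  qed
  have "\<mu> - 2 * M / real T \<le> VT U f k Y T y0" if "1 \<le> T" for T
  proof -
    have "0 < real T" using that by simp
    then have "\<mu> - 2 * M / real T = (real T * \<mu> - 2 * M) / real T"
      by (simp add: field_simps)
    also have "\<dots> \<le> opt_cost T y0 / real T"
      using low \<open>0 < real T\<close> by (intro divide_right_mono) simp_all
    finally show ?thesis by (simp add: VT_eq_opt_cost)
  qed
  then have "\<forall>\<^sub>F T in sequentially. \<mu> - 2 * M / real T \<le> VT U f k Y T y0"
    by (rule eventually_sequentiallyI)
  with tendsto_diff[OF tendsto_const lim_const_over_n]
  have "\<mu> - 0 \<le> V y0"
    by (rule tendsto_le[OF trivial_limit_sequentially V_lim[OF assms(1)]])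
  then show ?thesis by simp
qed

text \<open>Limits of ever finer chains whose penalized cost never becomes positive are exact
  trajectories starting where \<open>V \<ge> V y0\<close> and with average cost at most \<open>c\<close>.\<close>

lemma limit_of_penalized_chains:
  assumes "y0 \<in> Y"
    and chain: "\<And>j. delta_chain (1 / (real j + 1)) (z j) (u j) (N j)" and long: "\<And>j. j < N j"
    and prefix: "\<And>j m. m \<le> N j \<Longrightarrow>
      (\<Sum>t<m. k (z j t) (u j t) + real j * max 0 (V y0 - V (z j t)) - c) \<le> 0"
  shows "V y0 \<le> c"
proof -
  obtain r z' u' where r: "strict_mono r" and G': "\<And>t. (z' t, u' t) \<in> G"
    and dyn: "\<And>t. z' (Suc t) = f (z' t) (u' t)"
    and zlim: "\<And>t. (\<lambda>i. z (r i) t) \<longlonglongrightarrow> z' t" and ulim: "\<And>t. (\<lambda>i. u (r i) t) \<longlonglongrightarrow> u' t"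
    using shrinking_delta_chains_converge[OF chain long] by blast
  have zG: "t < N j \<Longrightarrow> (z j t, u j t) \<in> G" for j t
    using chain[of j] by (simp add: delta_chain_def)
  have long_r: "t < N (r i)" if "t \<le> i" for i t
    using seq_suble[OF r, of i] long[of "r i"] that by linarith
  have inG: "\<forall>\<^sub>F i in sequentially. (z (r i) t, u (r i) t) \<in> G" for t
    using zG long_r by (intro eventually_sequentiallyI[of t]) blast
  define K where "K = cost_bound + \<bar>c\<bar>"
  have start: "V y0 \<le> V (z' 0)"
  proof -
    have pen_le: "real i * max 0 (V y0 - V (z (r i) 0)) \<le> K" for i
    proof -
      have "k (z (r i) 0) (u (r i) 0) + real (r i) * max 0 (V y0 - V (z (r i) 0)) - c \<le> 0"
        using prefix[of 1 "r i"] long_r[of 0 i] by simp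
      moreover have "\<bar>k (z (r i) 0) (u (r i) 0)\<bar> \<le> cost_bound"
        using abs_k_le_cost_bound zG long_r[of 0 i] by blast
      moreover have "real i * max 0 (V y0 - V (z (r i) 0)) \<le> real (r i) * max 0 (V y0 - V (z (r i) 0))"
        using seq_suble[OF r, of i] by (intro mult_right_mono) auto
      ultimately show ?thesis unfolding K_def by linarith
    qed
    have "(\<lambda>i. K / real i) \<longlonglongrightarrow> 0"
      by (rule lim_const_over_n)
    moreover have "(\<lambda>i. max 0 (V y0 - V (z (r i) 0))) \<longlonglongrightarrow> max 0 (V y0 - V (z' 0))"
    proof (intro tendsto_max tendsto_const tendsto_diff)
      have "\<forall>\<^sub>F i in sequentially. z (r i) 0 \<in> Y"
        using inG[of 0] by (rule eventually_mono) (simp add: mem_G_iff)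
      moreover have "z' 0 \<in> Y" using G'[of 0] by (simp add: mem_G_iff)
      ultimately show "(\<lambda>i. V (z (r i) 0)) \<longlonglongrightarrow> V (z' 0)"
        using continuous_on_tendsto_compose[OF V_cont zlim[of 0]] by blast
    qed
    moreover have "\<forall>\<^sub>F i in sequentially. max 0 (V y0 - V (z (r i) 0)) \<le> K / real i"
    proof (rule eventually_sequentiallyI[of 1])
      fix i :: nat assume "1 \<le> i"
      have "max 0 (V y0 - V (z (r i) 0)) * real i \<le> K"
        by (subst mult.commute) (rule pen_le)
      with \<open>1 \<le> i\<close> show "max 0 (V y0 - V (z (r i) 0)) \<le> K / real i"
        by (simp only: pos_le_divide_eq of_nat_0_less_iff)
    qed
    ultimately have "max 0 (V y0 - V (z' 0)) \<le> 0"
      by (rule tendsto_le[OF trivial_limit_sequentially])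
    then show ?thesis by simp
  qed
  have cost: "(\<Sum>t<m. k (z' t) (u' t)) \<le> real m * c" for m
  proof (rule LIMSEQ_le_const2)
    have "(\<lambda>i. k (z (r i) t) (u (r i) t)) \<longlonglongrightarrow> k (z' t) (u' t)" for t
      using continuous_on_tendsto_compose[OF continuous_on_k_G tendsto_Pair[OF zlim ulim] G' inG]
      by simp
    then show "(\<lambda>i. \<Sum>t<m. k (z (r i) t) (u (r i) t)) \<longlonglongrightarrow> (\<Sum>t<m. k (z' t) (u' t))"
      by (rule tendsto_sum)
    show "\<exists>n0. \<forall>i\<ge>n0. (\<Sum>t<m. k (z (r i) t) (u (r i) t)) \<le> real m * c"
    proof (intro exI[of _ m] allI impI)
      fix i assume "m \<le> i"
      have "(\<Sum>t<m. k (z (r i) t) (u (r i) t) - c)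
          \<le> (\<Sum>t<m. k (z (r i) t) (u (r i) t) + real (r i) * max 0 (V y0 - V (z (r i) t)) - c)"
        by (intro sum_mono) simp
      also have "\<dots> \<le> 0"
        using long_r[OF \<open>m \<le> i\<close>] by (intro prefix) simp
      finally show "(\<Sum>t<m. k (z (r i) t) (u (r i) t)) \<le> real m * c"
        by (simp add: sum_subtractf)
    qed
  qed
  have traj: "traj f (z' 0) u' t = z' t" for t
    by (induction t) (simp_all add: dyn)
  have "V (z' 0) \<le> c"
  proof (rule V_le_of_average_cost_le)
    show "z' 0 \<in> Y" using G'[of 0] by (simp add: mem_G_iff)
    show "admissible U f Y T (z' 0) u'" for T
      using G' by (simp add: admissible_def traj Gset_def)
    show "(\<Sum>t<T. k (traj f (z' 0) u' t) (u' t)) \<le> real T * c" for T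
      using cost by (simp add: traj)
  qed
  with start show ?thesis by linarith
qed

lemma chain_costs_bounded_below:
  assumes "y0 \<in> Y" and "\<epsilon> > 0"
  shows "\<exists>\<delta>>0. \<exists>L\<ge>0. \<exists>B. \<forall>z u T. delta_chain \<delta> z u T \<longrightarrow>
           - B \<le> (\<Sum>t<T. k (z t) (u t) + L * max 0 (V y0 - V (z t)) - (V y0 - \<epsilon>))"
proof (rule ccontr)
  assume contra: "\<not> ?thesis"
  define c where "c = V y0 - \<epsilon>"
  define pc where "pc j z u t = k (z t) (u t) + real j * max 0 (V y0 - V (z t)) - c"
    for j :: nat and z u and t :: nat
  define K where "K = cost_bound + \<bar>c\<bar> + 1"
  have "G \<noteq> {}" using G_nonempty assms(1) by blast
  then have "0 \<le> cost_bound" by (rule cost_bound_nonneg)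
  then have "0 < K" unfolding K_def using abs_ge_zero[of c] by linarith
  have "\<exists>z u T. delta_chain (1 / (real j + 1)) z u T \<and> (\<Sum>t<T. pc j z u t) < - (real j * K)" for j
  proof (rule ccontr)
    assume "\<not> (\<exists>z u T. delta_chain (1 / (real j + 1)) z u T \<and> (\<Sum>t<T. pc j z u t) < - (real j * K))"
    then have "\<forall>z u T. delta_chain (1 / (real j + 1)) z u T \<longrightarrow>
        - (real j * K) \<le> (\<Sum>t<T. k (z t) (u t) + real j * max 0 (V y0 - V (z t)) - (V y0 - \<epsilon>))"
      by (auto simp: pc_def c_def not_less)
    moreover have "1 / (real j + 1) > 0" and "real j \<ge> 0" by simp_all
    ultimately show False using contra by blast
  qed
  then have "\<forall>j. \<exists>z u T. delta_chain (1 / (real j + 1)) z u T \<and> (\<Sum>t<T. pc j z u t) < - (real j * K)"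
    by blast
  then obtain zs us Ts where chain: "\<And>j. delta_chain (1 / (real j + 1)) (zs j) (us j) (Ts j)"
    and neg_sum: "\<And>j. (\<Sum>t<Ts j. pc j (zs j) (us j) t) < - (real j * K)"
    by metis
  have pc_ge: "- K \<le> pc j (zs j) (us j) t" if "t < Ts j" for j t
  proof -
    have "\<bar>k (zs j t) (us j t)\<bar> \<le> cost_bound"
      using abs_k_le_cost_bound chain[of j] that by (simp add: delta_chain_def)
    then have "- cost_bound \<le> k (zs j t) (us j t)" by (simp add: abs_le_iff)
    moreover have "0 \<le> real j * max 0 (V y0 - V (zs j t))" by simp
    moreover have "c \<le> \<bar>c\<bar>" by simp
    ultimately show ?thesis unfolding pc_def K_def by linarith
  qed
  have "\<exists>s. s + j < Ts j \<and> (\<forall>m. s + m \<le> Ts j \<longrightarrow> (\<Sum>t<m. pc j (zs j) (us j) (s + t)) \<le> 0)" for j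
  proof -
    obtain s where "s + j < Ts j" and "\<And>m. s + m \<le> Ts j \<Longrightarrow> (\<Sum>t<m. pc j (zs j) (us j) (s + t)) \<le> 0"
      using nonpos_partial_sums_window[OF \<open>0 < K\<close> pc_ge[where j=j] neg_sum[of j]] by blast
    then show ?thesis by blast
  qed
  then have "\<forall>j. \<exists>s. s + j < Ts j \<and> (\<forall>m. s + m \<le> Ts j \<longrightarrow> (\<Sum>t<m. pc j (zs j) (us j) (s + t)) \<le> 0)"
    by blast
  from choice[OF this] obtain s where s_window: "\<forall>j. s j + j < Ts j \<and>
      (\<forall>m. s j + m \<le> Ts j \<longrightarrow> (\<Sum>t<m. pc j (zs j) (us j) (s j + t)) \<le> 0)" ..
  then have s: "s j + j < Ts j"
    and window: "s j + m \<le> Ts j \<Longrightarrow> (\<Sum>t<m. pc j (zs j) (us j) (s j + t)) \<le> 0" for j m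
    by blast+
  define z where "z j = (\<lambda>t. zs j (s j + t))" for j
  define u where "u j = (\<lambda>t. us j (s j + t))" for j
  define N where "N j = Ts j - s j" for j
  have "V y0 \<le> c"
  proof (rule limit_of_penalized_chains[OF assms(1)])
    show "delta_chain (1 / (real j + 1)) (z j) (u j) (N j)" for j
      unfolding z_def u_def N_def using s[of j] by (intro delta_chain_shift[OF chain]) simp
    show "j < N j" for j
      using s[of j] by (simp add: N_def)
    show "(\<Sum>t<m. k (z j t) (u j t) + real j * max 0 (V y0 - V (z j t)) - c) \<le> 0"
      if "m \<le> N j" for j m
      using window[of j m] s[of j] that by (simp add: z_def u_def N_def pc_def)
  qed
  then show False using \<open>\<epsilon> > 0\<close> by (simp add: c_def)
qed

lemma dual_feasible_exists:
  assumes "y0 \<in> Y" and "\<epsilon> > 0"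
  shows "\<exists>\<psi> \<eta>. dual_feasible U f k Y y0 (V y0 - \<epsilon>) \<psi> \<eta>"
proof -
  obtain \<delta> L B where "\<delta> > 0" and "0 \<le> L" and chain_cost_ge: "\<And>z u T. delta_chain \<delta> z u T \<Longrightarrow>
      - B \<le> (\<Sum>t<T. k (z t) (u t) + L * max 0 (V y0 - V (z t)) - (V y0 - \<epsilon>))"
    using chain_costs_bounded_below[OF assms] by blast
  define h where "h y v = k y v + L * max 0 (V y0 - V y) - (V y0 - \<epsilon>)" for y v
  define K where "K = cost_bound + \<bar>V y0 - \<epsilon>\<bar>"
  have "G \<noteq> {}" using G_nonempty assms(1) by blast
  then have "0 \<le> K" unfolding K_def using cost_bound_nonneg by simp
  have h_ge: "- K \<le> h y v" if "(y, v) \<in> G" for y v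
  proof -
    have "- cost_bound \<le> k y v" using abs_k_le_cost_bound[OF that] by (simp add: abs_le_iff)
    moreover have "0 \<le> L * max 0 (V y0 - V y)" using \<open>0 \<le> L\<close> by simp
    moreover have "V y0 - \<epsilon> \<le> \<bar>V y0 - \<epsilon>\<bar>" by simp
    ultimately show ?thesis unfolding h_def K_def by linarith
  qed
  have chain_h: "- B \<le> (\<Sum>t<T. h (z t) (u t))" if "delta_chain \<delta> z u T" for z u T
    using chain_cost_ge[OF that] by (simp add: h_def)
  obtain \<eta> where "continuous_on Y \<eta>" and \<eta>_sub: "\<And>y v. (y, v) \<in> G \<Longrightarrow> \<eta> y \<le> h y v + \<eta> (f y v)"
    using continuous_subsolution_from_chain_costs[where h=h, OF \<open>\<delta> > 0\<close> chain_h h_ge \<open>0 \<le> K\<close>] by blast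
  \<comment> \<open>\<open>\<psi>\<close> turns the penalty \<open>L * max 0 (V y0 - V y)\<close> into the telescoping term
    \<open>\<psi> y0 - \<psi> y\<close>; it is nondecreasing along G because V is.\<close>
  define \<psi> where "\<psi> y = L * min (V y) (V y0)" for y
  have "dual_feasible U f k Y y0 (V y0 - \<epsilon>) \<psi> \<eta>"
    unfolding dual_feasible_def
  proof (intro conjI ballI)
    show "continuous_on Y \<psi>"
      unfolding \<psi>_def by (intro continuous_intros V_cont)
    show "continuous_on Y \<eta>" by fact
    fix p assume "p \<in> G"
    obtain y v where p: "p = (y, v)" by fastforce
    with \<open>p \<in> G\<close> have yv: "(y, v) \<in> G" by simp
    have "\<psi> y0 - \<psi> y = L * max 0 (V y0 - V y)"
      unfolding \<psi>_def by (simp add: max_def min_def algebra_simps)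
    then have "0 \<le> k y v + \<psi> y0 - \<psi> y + \<eta> (f y v) - \<eta> y - (V y0 - \<epsilon>)"
      using \<eta>_sub[OF yv] unfolding h_def by linarith
    moreover have "\<psi> y \<le> \<psi> (f y v)"
      unfolding \<psi>_def using V_le_V_successor[OF yv] \<open>0 \<le> L\<close> by (intro mult_left_mono) auto
    ultimately show "case p of (y, u) \<Rightarrow>
        0 \<le> k y u + \<psi> y0 - \<psi> y + \<eta> (f y u) - \<eta> y - (V y0 - \<epsilon>) \<and> 0 \<le> \<psi> (f y u) - \<psi> y"
      by (simp add: p)
  qed
  then show ?thesis by blast
qed

lemma dstar_eq_V:
  assumes "y0 \<in> Y" shows "dstar U f k Y y0 = V y0"
proof -
  let ?S = "{\<mu>. \<exists>\<psi> \<eta>. dual_feasible U f k Y y0 \<mu> \<psi> \<eta>}"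
  have upper: "\<mu> \<le> V y0" if "\<mu> \<in> ?S" for \<mu>
    using that weak_duality[OF assms] by blast
  have near: "V y0 - \<epsilon> \<in> ?S" if "\<epsilon> > 0" for \<epsilon>
    using dual_feasible_exists[OF assms that] by blast
  have "Sup ?S \<le> V y0"
    using near[of 1] upper by (intro cSup_least) auto
  moreover have "V y0 \<le> Sup ?S"
  proof (rule field_le_epsilon)
    fix \<epsilon> :: real assume "0 < \<epsilon>"
    have "V y0 - \<epsilon> \<le> Sup ?S"
      using near[OF \<open>0 < \<epsilon>\<close>] upper by (intro cSup_upper bdd_aboveI[of _ "V y0"]) auto
    then show "V y0 \<le> Sup ?S + \<epsilon>" by simp
  qed
  ultimately show ?thesis unfolding dstar_def by simp
qed

lemma dual_optimal_iff:
  assumes "y0 \<in> Y" and \<psi>_cont: "continuous_on Y \<psi>" and \<eta>_cont: "continuous_on Y \<eta>"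
  shows "dual_optimal U f k Y y0 \<psi> \<eta> \<longleftrightarrow>
    (\<forall>(y, u)\<in>G. \<psi> (f y u) - \<psi> y \<ge> 0) \<and>
    min_on_eq G (\<lambda>(y, u). k y u - \<psi> y + \<eta> (f y u) - \<eta> y) (V y0 - \<psi> y0)"
    (is "_ \<longleftrightarrow> ?mono \<and> min_on_eq G ?g _")
proof
  assume opt: "dual_optimal U f k Y y0 \<psi> \<eta>"
  have pointwise: "V y0 - \<psi> y0 \<le> ?g (y, u) \<and> \<psi> y \<le> \<psi> (f y u)" if "(y, u) \<in> G" for y u
    using opt that unfolding dual_optimal_def dstar_eq_V[OF assms(1)] by fastforce
  then have mono: ?mono by auto
  have lower: "V y0 - \<psi> y0 \<le> ?g p" if "p \<in> G" for p
    using pointwise[of "fst p" "snd p"] that by simp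
  have "continuous_on G ?g"
  proof -
    have "continuous_on G (\<lambda>p. \<psi> (fst p))"
      by (rule continuous_on_compose2[OF \<psi>_cont continuous_on_fst]) (use G_subset in auto)
    moreover have "continuous_on G (\<lambda>p. \<eta> (fst p))"
      by (rule continuous_on_compose2[OF \<eta>_cont continuous_on_fst]) (use G_subset in auto)
    moreover have "continuous_on G (\<lambda>p. \<eta> ((\<lambda>(y, u). f y u) p))"
      by (rule continuous_on_compose2[OF \<eta>_cont continuous_on_f_G]) (auto simp: Gset_def Aset_def)
    ultimately have "continuous_on G
        (\<lambda>p. (\<lambda>(y, u). k y u) p - \<psi> (fst p) + \<eta> ((\<lambda>(y, u). f y u) p) - \<eta> (fst p))"
      by (intro continuous_on_diff continuous_on_add continuous_on_k_G)
    then show ?thesis by (simp add: case_prod_beta)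
  qed
  then obtain p0 where "p0 \<in> G" and p0_min: "\<And>p. p \<in> G \<Longrightarrow> ?g p0 \<le> ?g p"
    using continuous_attains_inf[OF compact_G] G_nonempty assms(1) by blast
  \<comment> \<open>The minimum of \<open>?g\<close> yields a feasible value of the dual, so weak duality caps it.\<close>
  have "dual_feasible U f k Y y0 (?g p0 + \<psi> y0) \<psi> \<eta>"
    unfolding dual_feasible_def
  proof (intro conjI \<psi>_cont \<eta>_cont ballI)
    fix p assume "p \<in> G"
    obtain y u where p: "p = (y, u)" by fastforce
    with \<open>p \<in> G\<close> have yu: "(y, u) \<in> G" by simp
    show "case p of (y, u) \<Rightarrow>
        0 \<le> k y u + \<psi> y0 - \<psi> y + \<eta> (f y u) - \<eta> y - (?g p0 + \<psi> y0) \<and> 0 \<le> \<psi> (f y u) - \<psi> y"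
      using p0_min[OF yu] pointwise[OF yu] by (simp add: p)
  qed
  then have "?g p0 + \<psi> y0 \<le> V y0" by (rule weak_duality[OF assms(1)])
  with lower[OF \<open>p0 \<in> G\<close>] have "?g p0 = V y0 - \<psi> y0" by linarith
  then show "?mono \<and> min_on_eq G ?g (V y0 - \<psi> y0)"
    unfolding min_on_eq_def using mono lower \<open>p0 \<in> G\<close> by blast
next
  assume "?mono \<and> min_on_eq G ?g (V y0 - \<psi> y0)"
  then have mono: ?mono and lower: "\<And>p. p \<in> G \<Longrightarrow> V y0 - \<psi> y0 \<le> ?g p"
    unfolding min_on_eq_def by blast+
  show "dual_optimal U f k Y y0 \<psi> \<eta>"
    unfolding dual_optimal_def dstar_eq_V[OF assms(1)]
  proof (intro conjI \<psi>_cont \<eta>_cont ballI)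
    fix p assume "p \<in> G"
    obtain y u where p: "p = (y, u)" by fastforce
    with \<open>p \<in> G\<close> have yu: "(y, u) \<in> G" by simp
    show "case p of (y, u) \<Rightarrow>
        V y0 \<le> k y u + \<psi> y0 - \<psi> y + \<eta> (f y u) - \<eta> y \<and> 0 \<le> \<psi> (f y u) - \<psi> y"
      using lower[OF yu] mono yu by (auto simp: p)
  qed
qed

lemma dual_optimal_V:
  assumes "y0 \<in> Y" and "continuous_on Y \<eta>"
    and min: "min_on_eq G (\<lambda>(y, u). k y u - V y + \<eta> (f y u) - \<eta> y) 0"
  shows "dual_optimal U f k Y y0 V \<eta>"
  unfolding dual_optimal_def dstar_eq_V[OF assms(1)]
proof (intro conjI V_cont assms(2) ballI)
  fix p assume "p \<in> G"
  obtain y u where p: "p = (y, u)" by fastforce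
  with \<open>p \<in> G\<close> have yu: "(y, u) \<in> G" by simp
  have "0 \<le> k y u - V y + \<eta> (f y u) - \<eta> y"
    using min yu unfolding min_on_eq_def by fastforce
  then show "case p of (y, u) \<Rightarrow>
      V y0 \<le> k y u + V y0 - V y + \<eta> (f y u) - \<eta> y \<and> 0 \<le> V (f y u) - V y"
    using V_le_V_successor[OF yu] by (simp add: p)
qed

end

theorem proposition4p4:
  fixes Y :: "(real ^ 'm) set" and U0 :: "'u::metric_space set"
    and U :: "real ^ 'm \<Rightarrow> 'u set"
    and f :: "real ^ 'm \<Rightarrow> 'u \<Rightarrow> real ^ 'm" and k :: "real ^ 'm \<Rightarrow> 'u \<Rightarrow> real"
    and V :: "real ^ 'm \<Rightarrow> real" and y0 :: "real ^ 'm"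
  assumes Y_ne: "Y \<noteq> {}" and Y_cpt: "compact Y"
    and U0_cpt: "compact U0"
    and U_sub: "\<forall>y\<in>Y. U y \<subseteq> U0"
    and U_cpt: "\<forall>y\<in>Y. compact (U y)"
    and U_usc: "usc_on Y U"
    and f_cont: "continuous_on (UNIV \<times> U0) (\<lambda>(y,u). f y u)"
    and k_cont: "continuous_on (UNIV \<times> U0) (\<lambda>(y,u). k y u)"
    and A_ne: "\<forall>y\<in>Y. Aset U f Y y \<noteq> {}"
    and V_lim: "\<forall>y\<in>Y. (\<lambda>T. VT U f k Y T y) \<longlonglongrightarrow> V y"
    and V_cont: "continuous_on Y V"
    and y0: "y0 \<in> Y"
  shows
    "(\<forall>\<psi> \<eta>. continuous_on Y \<psi> \<and> continuous_on Y \<eta> \<longrightarrow>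
        (dual_optimal U f k Y y0 \<psi> \<eta> \<longleftrightarrow>
           (\<forall>(y,u)\<in>Gset U f Y. \<psi> (f y u) - \<psi> y \<ge> 0) \<and>
           min_on_eq (Gset U f Y) (\<lambda>(y,u). k y u - \<psi> y + \<eta> (f y u) - \<eta> y) (V y0 - \<psi> y0)))
     \<and>
     (\<forall>\<eta>. continuous_on Y \<eta> \<and>
          min_on_eq (Gset U f Y) (\<lambda>(y,u). k y u - V y + \<eta> (f y u) - \<eta> y) 0
          \<longrightarrow> dual_optimal U f k Y y0 V \<eta>)"
proof -
  interpret control_system_with_limit_value Y U0 U f k V
    by unfold_locales
      (use Y_cpt U0_cpt U_sub U_cpt U_usc f_cont k_cont A_ne V_lim V_cont in
        \<open>auto intro: compact_imp_closed\<close>)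
  show ?thesis
    using dual_optimal_iff[OF y0] dual_optimal_V[OF y0] by blast
qed

end
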